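(* Let $D\geq 4$ and $n\geq 1$ be integers. Let $\mathcal{S}_{(1)},\mathcal{S}_{(2)},\mathcal{S}_{(3)},\mathcal{S}_{(n+2)},\mathcal{S}_{(n+3)},\mathcal{S}_{(n+4)}$ be scalar curvature invariants (built from the metric and the Riemann tensor) such that for each of these orders $m\in\{1,2,3,n+2,n+3,n+4\}$ and every function $f(r)$ $$\mathcal{S}_{(m)}|_f = r^{2-D}\frac{\mathrm{d}}{\mathrm{d}r}\Big[r^{D-1}\Big(B+\tfrac{D-4}{4}\psi\Big)^{m-1}\Big(2(m-2)B-(D-4+2m)\psi\Big)\Big].$$ Define $$\mathcal{S}_{(n+5)}=-\frac{3(n+3)\mathcal{S}_{(1)}\mathcal{S}_{(n+4)}}{4(D-1)(n+1)}+\frac{3(n+4)\mathcal{S}_{(2)}\mathcal{S}_{(n+3)}}{4(D-1)n}-\frac{(n+3)(n+4)\mathcal{S}_{(3)}\mathcal{S}_{(n+2)}}{4(D-1)n(n+1)}.$$ Then for every $f(r)$, $\mathcal{S}_{(n+5)}|_f$ is given by the same formula with $m=n+5$; in particular $\mathcal{S}_{(n+5)}$ is of the GQTG class.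
   Context: Consider the metric $\mathrm{d}s^2=-f(r)\mathrm{d}t^2+\mathrm{d}r^2/f(r)+r^2\mathrm{d}\Sigma^2_{k}$ in $D$ dimensions, where $\mathrm{d}\Sigma^2_k$ is the metric of a $(D-2)$-dimensional space of constant sectional curvature $k\in\{1,0,-1\}$. For a scalar curvature invariant $\mathcal{L}$, $\mathcal{L}|_f$ denotes its evaluation on this metric, a function of $r,f,f',f''$. Set $A=f''(r)/2$, $B=-f'(r)/(2r)$, $\psi=(k-f(r))/r^2$. A density $\mathcal{L}$ is of the GQTG class if $r^{D-2}\mathcal{L}|_f=\frac{\mathrm{d}}{\mathrm{d}r}F_0(r,f,f')$ for some function $F_0$, for all $f$ (equivalently, the Euler–Lagrange equation of $f$ for $r^{D-2}\mathcal{L}|_f$ vanishes identically). *)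

theory Defs
  imports "HOL-Analysis.Analysis"
begin

text \<open>A scalar invariant L evaluated on the metric with blackening function f is
  represented by its evaluation L|_f as a function of (r, f(r), f'(r), f''(r)):
  type real => real => real => real => real.\<close>

type_synonym eval_fun = "real \<Rightarrow> real \<Rightarrow> real \<Rightarrow> real \<Rightarrow> real"

definition twice_diff :: "(real \<Rightarrow> real) \<Rightarrow> (real \<Rightarrow> real) \<Rightarrow> (real \<Rightarrow> real) \<Rightarrow> bool" where
  "twice_diff f f1 f2 \<longleftrightarrow>
     (\<forall>x. (f has_real_derivative f1 x) (at x)) \<and> (\<forall>x. (f1 has_real_derivative f2 x) (at x))"

definition Bq :: "(real \<Rightarrow> real) \<Rightarrow> real \<Rightarrow> real" where
  "Bq f1 r = - f1 r / (2 * r)"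

definition psiq :: "real \<Rightarrow> (real \<Rightarrow> real) \<Rightarrow> real \<Rightarrow> real" where
  "psiq k f r = (k - f r) / r ^ 2"

definition profile :: "nat \<Rightarrow> real \<Rightarrow> nat \<Rightarrow> (real \<Rightarrow> real) \<Rightarrow> (real \<Rightarrow> real) \<Rightarrow> real \<Rightarrow> real" where
  "profile D k m f f1 r =
     r ^ (D - 1) * (Bq f1 r + (real D - 4) / 4 * psiq k f r) ^ (m - 1)
       * (2 * (real m - 2) * Bq f1 r - (real D - 4 + 2 * real m) * psiq k f r)"

definition is_GQTG :: "nat \<Rightarrow> eval_fun \<Rightarrow> bool" where
  "is_GQTG D L \<longleftrightarrow> (\<exists>F0 :: real \<Rightarrow> real \<Rightarrow> real \<Rightarrow> real.
     \<forall>f f1 f2 r. twice_diff f f1 f2 \<and> r > 0 \<longrightarrow>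
       ((\<lambda>s. F0 s (f s) (f1 s)) has_real_derivative r ^ (D - 2) * L r (f r) (f1 r) (f2 r)) (at r))"

text \<open>The recursively defined density S_(n+5); evaluation of a product of invariants is
  the product of the evaluations.\<close>
definition S_next :: "nat \<Rightarrow> nat \<Rightarrow> (nat \<Rightarrow> eval_fun) \<Rightarrow> eval_fun" where
  "S_next D n S = (\<lambda>r x y z.
     - 3 * (real n + 3) * S 1 r x y z * S (n + 4) r x y z / (4 * (real D - 1) * (real n + 1))
     + 3 * (real n + 4) * S 2 r x y z * S (n + 3) r x y z / (4 * (real D - 1) * real n)
     - (real n + 3) * (real n + 4) * S 3 r x y z * S (n + 2) r x y z
         / (4 * (real D - 1) * real n * (real n + 1)))"

end

theory Submission
  imports Defs
begin

(* With X = B + (D-4)/4 psi and Z = r X', the product rule and the identities r B' = -(A + B),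
   r psi' = 2 (B - psi) turn r^(2-D) times the derivative of the order-m bracket into
   X^(m-2) Q_m(X, Z, psi), where Q_m is a quadratic form whose coefficients are polynomials in m.
   The combination defining S_(n+5) then reduces, after factoring out X^(n+1), to a single
   polynomial identity between Q_1, Q_2, Q_3, Q_(n+2), ..., Q_(n+5), valid for all real n.
   The GQTG property follows because the bracket itself is the required F0. *)

lemma Bq_has_real_derivative:
  assumes "(f1 has_real_derivative f2r) (at r)" and "r \<noteq> 0"
  shows "(Bq f1 has_real_derivative - (f2r / 2 + Bq f1 r) / r) (at r)"
  unfolding Bq_def [abs_def]
  by (rule derivative_eq_intros assms refl | use assms in \<open>simp add: field_simps\<close>)+

lemma psiq_has_real_derivative:
  assumes "(f has_real_derivative f1 r) (at r)" and "r \<noteq> 0"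
  shows "(psiq k f has_real_derivative 2 * (Bq f1 r - psiq k f r) / r) (at r)"
  unfolding psiq_def [abs_def] Bq_def
  by (rule derivative_eq_intros assms refl
      | use assms in \<open>simp add: field_simps power2_eq_square power3_eq_cube\<close>)+

lemma profile_has_real_derivative:
  fixes D m :: nat and k :: real
  assumes f: "(f has_real_derivative f1 r) (at r)" and f1: "(f1 has_real_derivative f2r) (at r)"
    and r: "r \<noteq> 0" and D: "D \<ge> 2"
  defines "c \<equiv> (real D - 4) / 4" and "B \<equiv> Bq f1 r" and "\<psi> \<equiv> psiq k f r" and "A \<equiv> f2r / 2"
  defines "X \<equiv> B + c * \<psi>" and "Y \<equiv> 2 * (real m - 2) * B - (4 * c + 2 * real m) * \<psi>"
    and "Z \<equiv> - (A + B) + 2 * c * (B - \<psi>)"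
    and "W \<equiv> - 2 * (real m - 2) * (A + B) - 2 * (4 * c + 2 * real m) * (B - \<psi>)"
  \<comment> \<open>Z and W are r times the derivatives of X and Y.\<close>
  shows "(profile D k m f f1 has_real_derivative
           r ^ (D - 2) * ((4 * c + 3) * X ^ (m - 1) * Y + real (m - 1) * X ^ (m - 2) * Z * Y
                          + X ^ (m - 1) * W)) (at r)"
proof -
  have powers: "D - 1 - Suc 0 = D - 2" "m - 1 - Suc 0 = m - 2" "real (D - 1) = real D - 1"
    "r ^ (D - 1) = r ^ (D - 2) * r"
    using D by (auto simp flip: power_Suc2 simp: Suc_diff_Suc numeral_2_eq_2)
  note B' = Bq_has_real_derivative [OF f1 r]
    and \<psi>' = psiq_has_real_derivative [of f f1 r k, OF f r]
  show ?thesis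
    unfolding profile_def [abs_def]
    apply (rule derivative_eq_intros B' \<psi>' refl)+
    unfolding powers X_def Y_def Z_def W_def A_def B_def \<psi>_def c_def
    using r by (simp add: field_simps)
qed

lemma power_int_2_minus_mult_power:
  fixes r :: real
  assumes "r \<noteq> 0" and "D \<ge> 2"
  shows "r powi (2 - int D) * r ^ (D - 2) = 1"
proof -
  have "2 - int D = - int (D - 2)"
    using assms(2) by linarith
  then have "r powi (2 - int D) = inverse (r ^ (D - 2))"
    by (simp only: power_int_minus power_int_of_nat)
  then show ?thesis
    using assms(1) by simp
qed

(* r^(2-D) times the derivative of the order-m bracket is X^(m-2) * density_poly c X Z psi m,
   with c = (D-4)/4 and X, Z as in the header. *)
definition density_poly :: "real \<Rightarrow> real \<Rightarrow> real \<Rightarrow> real \<Rightarrow> real \<Rightarrow> real" where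
  "density_poly c X Z \<psi> m =
     2 * (m - 6 - 8 * c + 2 * c * m) * X\<^sup>2 + 2 * m * (m - 2) * X * Z
     - 2 * m * (1 + c) * (1 + 2 * c) * X * \<psi> - 2 * m * (m - 1) * (1 + c) * Z * \<psi>"

lemma reduced_deriv_profile:
  fixes D m :: nat and k :: real
  assumes f: "twice_diff f f1 f2" and r: "r \<noteq> 0" and D: "D \<ge> 2"
  defines "c \<equiv> (real D - 4) / 4" and "B \<equiv> Bq f1 r" and "\<psi> \<equiv> psiq k f r" and "A \<equiv> f2 r / 2"
  defines "X \<equiv> B + c * \<psi>" and "Z \<equiv> - (A + B) + 2 * c * (B - \<psi>)"
  \<comment> \<open>For m = 1 the true factor is X^(-1), not the truncated X^(m-2) = 1; hence the factor X.\<close>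
  shows "X * (r powi (2 - int D) * deriv (profile D k 1 f f1) r) = density_poly c X Z \<psi> 1"
    and "m \<ge> 2 \<Longrightarrow> r powi (2 - int D) * deriv (profile D k m f f1) r
           = X ^ (m - 2) * density_poly c X Z \<psi> m"
proof -
  define Y where "Y m = 2 * (real m - 2) * B - (4 * c + 2 * real m) * \<psi>" for m
  define W where "W m = - 2 * (real m - 2) * (A + B) - 2 * (4 * c + 2 * real m) * (B - \<psi>)"
    for m
  have reduced: "r powi (2 - int D) * deriv (profile D k m f f1) r
      = (4 * c + 3) * X ^ (m - 1) * Y m + real (m - 1) * X ^ (m - 2) * Z * Y m + X ^ (m - 1) * W m"
    for m
  proof -
    have "(f has_real_derivative f1 r) (at r)" and "(f1 has_real_derivative f2 r) (at r)"
      using f by (auto simp: twice_diff_def)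
    from profile_has_real_derivative [OF this r D, of k m]
    have "deriv (profile D k m f f1) r
       = r ^ (D - 2) * ((4 * c + 3) * X ^ (m - 1) * Y m + real (m - 1) * X ^ (m - 2) * Z * Y m
                        + X ^ (m - 1) * W m)"
      unfolding X_def Y_def Z_def W_def A_def B_def \<psi>_def c_def by (rule DERIV_imp_deriv)
    then show ?thesis
      using power_int_2_minus_mult_power [OF r D] by simp
  qed
  have density: "(4 * c + 3) * X * Y m + (real m - 1) * Z * Y m + X * W m
      = density_poly c X Z \<psi> m" for m
    unfolding X_def Y_def Z_def W_def density_poly_def by algebra
  show "X * (r powi (2 - int D) * deriv (profile D k 1 f f1) r) = density_poly c X Z \<psi> 1"
    using density [of 1] by (simp add: reduced algebra_simps)
  assume "m \<ge> 2"
  then have "X ^ (m - 1) = X ^ (m - 2) * X" and "real (m - 1) = real m - 1"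
    by (auto simp flip: power_Suc2 simp: Suc_diff_Suc numeral_2_eq_2)
  then show "r powi (2 - int D) * deriv (profile D k m f f1) r
      = X ^ (m - 2) * density_poly c X Z \<psi> m"
    unfolding reduced density [symmetric] by (simp add: algebra_simps)
qed

lemma density_poly_recursion:
  fixes c X Z \<psi> n :: real
  defines "Q \<equiv> density_poly c X Z \<psi>"
  shows "- 3 * (n + 3) * n * Q 1 * Q (n + 4) + 3 * (n + 4) * (n + 1) * Q 2 * Q (n + 3)
           - (n + 3) * (n + 4) * Q 3 * Q (n + 2)
         = 4 * (4 * c + 3) * n * (n + 1) * X\<^sup>2 * Q (n + 5)"
  unfolding Q_def density_poly_def by algebra

lemma S_next_eq_density_poly:
  fixes S :: "nat \<Rightarrow> eval_fun" and D n :: nat and X Z \<psi> :: real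
  defines "c \<equiv> (real D - 4) / 4"
  defines "Q \<equiv> density_poly c X Z \<psi>"
  assumes D: "D \<ge> 2" and n: "n \<ge> 1"
    and S1: "X * S 1 r x y z = Q 1"
    and S: "\<And>m. m \<in> {2, 3, n + 2, n + 3, n + 4} \<Longrightarrow> S m r x y z = X ^ (m - 2) * Q (real m)"
  shows "S_next D n S r x y z = X ^ (n + 3) * Q (real n + 5)"
proof -
  have "4 * c + 3 \<noteq> 0" and D1: "real D - 1 = 4 * c + 3"
    using D by (simp_all add: c_def field_simps)
  have "real n \<noteq> 0" and "real n + 1 \<noteq> 0"
    using n by auto
  have recursion: "- 3 * (real n + 3) * real n * Q 1 * Q (real n + 4)
      + 3 * (real n + 4) * (real n + 1) * Q 2 * Q (real n + 3)
      - (real n + 3) * (real n + 4) * Q 3 * Q (real n + 2)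
      = 4 * (4 * c + 3) * real n * (real n + 1) * X\<^sup>2 * Q (real n + 5)"
    unfolding Q_def by (rule density_poly_recursion)
  have "S_next D n S r x y z
      = (- 3 * (real n + 3) * real n * (S 1 r x y z * S (n + 4) r x y z)
          + 3 * (real n + 4) * (real n + 1) * (S 2 r x y z * S (n + 3) r x y z)
          - (real n + 3) * (real n + 4) * (S 3 r x y z * S (n + 2) r x y z))
        / (4 * (4 * c + 3) * real n * (real n + 1))"
    using \<open>4 * c + 3 \<noteq> 0\<close> \<open>real n \<noteq> 0\<close> \<open>real n + 1 \<noteq> 0\<close>
    unfolding S_next_def D1 by (simp add: divide_simps)
  also have "S 1 r x y z * S (n + 4) r x y z = X ^ (n + 1) * (X * S 1 r x y z * Q (real n + 4))"
    using S [of "n + 4"] by (simp add: algebra_simps)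
  also note S1
  also have "S 2 r x y z * S (n + 3) r x y z = X ^ (n + 1) * (Q 2 * Q (real n + 3))"
    using S [of 2] S [of "n + 3"] by simp
  also have "S 3 r x y z * S (n + 2) r x y z = X ^ (n + 1) * (Q 3 * Q (real n + 2))"
    using S [of 3] S [of "n + 2"] by (simp add: ac_simps)
  also have "- 3 * (real n + 3) * real n * (X ^ (n + 1) * (Q 1 * Q (real n + 4)))
          + 3 * (real n + 4) * (real n + 1) * (X ^ (n + 1) * (Q 2 * Q (real n + 3)))
          - (real n + 3) * (real n + 4) * (X ^ (n + 1) * (Q 3 * Q (real n + 2)))
      = X ^ (n + 1) * (- 3 * (real n + 3) * real n * Q 1 * Q (real n + 4)
          + 3 * (real n + 4) * (real n + 1) * Q 2 * Q (real n + 3)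
          - (real n + 3) * (real n + 4) * Q 3 * Q (real n + 2))"
    by (simp add: algebra_simps)
  also note recursion
  also have "X ^ (n + 1) * (4 * (4 * c + 3) * real n * (real n + 1) * X\<^sup>2 * Q (real n + 5))
               / (4 * (4 * c + 3) * real n * (real n + 1))
             = X ^ (n + 3) * Q (real n + 5)"
    using \<open>4 * c + 3 \<noteq> 0\<close> \<open>real n \<noteq> 0\<close> \<open>real n + 1 \<noteq> 0\<close>
    by (simp add: power_add power2_eq_square power3_eq_cube)
  finally show ?thesis .
qed

lemma S_next_eq_reduced_deriv_profile:
  fixes D n :: nat and k :: real and S :: "nat \<Rightarrow> eval_fun"
  assumes D: "D \<ge> 2" and n: "n \<ge> 1" and f: "twice_diff f f1 f2" and r: "r \<noteq> 0"
    and S: "\<And>m. m \<in> {1, 2, 3, n + 2, n + 3, n + 4} \<Longrightarrow>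
              S m r (f r) (f1 r) (f2 r) = r powi (2 - int D) * deriv (profile D k m f f1) r"
  shows "S_next D n S r (f r) (f1 r) (f2 r)
           = r powi (2 - int D) * deriv (profile D k (n + 5) f f1) r"
proof -
  define c where "c = (real D - 4) / 4"
  define \<psi> where "\<psi> = psiq k f r"
  define X where "X = Bq f1 r + c * \<psi>"
  define Z where "Z = - (f2 r / 2 + Bq f1 r) + 2 * c * (Bq f1 r - \<psi>)"
  note reduced = reduced_deriv_profile [OF f r D, where k = k,
      folded c_def \<psi>_def, folded X_def Z_def]
  have "S_next D n S r (f r) (f1 r) (f2 r) = X ^ (n + 3) * density_poly c X Z \<psi> (real n + 5)"
    unfolding c_def
  proof (rule S_next_eq_density_poly [OF D n])
    show "X * S 1 r (f r) (f1 r) (f2 r) = density_poly ((real D - 4) / 4) X Z \<psi> 1"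
      using S [of 1] reduced(1) by (simp add: c_def)
    show "S m r (f r) (f1 r) (f2 r) = X ^ (m - 2) * density_poly ((real D - 4) / 4) X Z \<psi> (real m)"
      if "m \<in> {2, 3, n + 2, n + 3, n + 4}" for m
      using that S [of m] reduced(2) [of m] by (auto simp: c_def)
  qed
  also have "\<dots> = r powi (2 - int D) * deriv (profile D k (n + 5) f f1) r"
    using reduced(2) [of "n + 5"] by (simp add: add.commute)
  finally show ?thesis .
qed

lemma is_GQTG_if_reduced_deriv_profile:
  fixes L :: eval_fun
  assumes D: "D \<ge> 2"
    and L: "\<And>f f1 f2 r. twice_diff f f1 f2 \<Longrightarrow> r > 0 \<Longrightarrow>
              L r (f r) (f1 r) (f2 r) = r powi (2 - int D) * deriv (profile D k m f f1) r"
  shows "is_GQTG D L"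
  unfolding is_GQTG_def
proof (intro exI [of _ "\<lambda>s a b. profile D k m (\<lambda>_. a) (\<lambda>_. b) s"] allI impI)
  fix f f1 f2 :: "real \<Rightarrow> real" and r :: real
  assume "twice_diff f f1 f2 \<and> r > 0"
  then have f: "twice_diff f f1 f2" and r: "r > 0"
    by auto
  have "(f has_real_derivative f1 r) (at r)" and "(f1 has_real_derivative f2 r) (at r)"
    using f by (auto simp: twice_diff_def)
  from profile_has_real_derivative [OF this _ D, of k m]
  obtain V where V: "(profile D k m f f1 has_real_derivative V) (at r)"
    using r by auto
  have "r ^ (D - 2) * L r (f r) (f1 r) (f2 r) = (r powi (2 - int D) * r ^ (D - 2)) * V"
    using L [OF f r] DERIV_imp_deriv [OF V] by simp
  also have "\<dots> = V"
    using power_int_2_minus_mult_power [of r D] r D by simp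
  moreover have "(\<lambda>s. profile D k m (\<lambda>_. f s) (\<lambda>_. f1 s) s) = profile D k m f f1"
    by (simp add: profile_def [abs_def] Bq_def psiq_def)
  ultimately show "((\<lambda>s. profile D k m (\<lambda>_. f s) (\<lambda>_. f1 s) s) has_real_derivative
                  r ^ (D - 2) * L r (f r) (f1 r) (f2 r)) (at r)"
    using V by simp
qed

theorem mainTheorem2:
  fixes D n :: nat and k :: real and S :: "nat \<Rightarrow> eval_fun"
  assumes "D \<ge> 4" and "n \<ge> 1" and "k \<in> {-1, 0, 1}"
    and "\<forall>m \<in> {1, 2, 3, n + 2, n + 3, n + 4}. \<forall>f f1 f2 r.
           twice_diff f f1 f2 \<and> r > 0 \<longrightarrow>
           S m r (f r) (f1 r) (f2 r) = r powi (2 - int D) * deriv (profile D k m f f1) r"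
  shows "(\<forall>f f1 f2 r. twice_diff f f1 f2 \<and> r > 0 \<longrightarrow>
            S_next D n S r (f r) (f1 r) (f2 r)
              = r powi (2 - int D) * deriv (profile D k (n + 5) f f1) r)
         \<and> is_GQTG D (S_next D n S)"
proof -
  have D: "D \<ge> 2"
    using assms(1) by simp
  have S_next: "S_next D n S r (f r) (f1 r) (f2 r)
      = r powi (2 - int D) * deriv (profile D k (n + 5) f f1) r"
    if f: "twice_diff f f1 f2" and r: "r > 0" for f f1 f2 r
  proof (rule S_next_eq_reduced_deriv_profile [OF D assms(2) f])
    show "r \<noteq> 0"
      using r by simp
  qed (use assms(4) f r in blast)
  then show ?thesis
    using is_GQTG_if_reduced_deriv_profile [OF D] by blast
qed

end
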